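(* Let $n\ge1$ and $a'_\ell=\mathrm{cmr}(a_\ell)$ for $\ell=1,\dots,n$. Then in the plactic monoid $\mathcal A_n^*/{\equiv_{\mathrm{knu}}}$: $a'_p\,a'_r\,a'_q\equiv_{\mathrm{knu}}a'_r\,a'_p\,a'_q$ whenever $1\le p\le q<r\le n$, and $a'_q\,a'_p\,a'_r\equiv_{\mathrm{knu}}a'_q\,a'_r\,a'_p$ whenever $1\le p<q\le r\le n$. Consequently, for all $u,v\in\mathcal A_n^*$, $u\equiv_{\mathrm{knu}}v$ implies $\mathrm{cmr}(u)\equiv_{\mathrm{knu}}\mathrm{cmr}(v)$.
   Context: $\mathcal A_n=\{a_1<\cdots<a_n\}$. The co-mirror of a letter is $\mathrm{cmr}(a_\ell)=a_na_{n-1}\cdots a_1$ with the letter $a_{n-\ell+1}$ omitted (a word of length $n-1$), extended to words by $\mathrm{cmr}(a_{\ell_1}\cdots a_{\ell_m})=\mathrm{cmr}(a_{\ell_1})\cdots\mathrm{cmr}(a_{\ell_m})$. $\equiv_{\mathrm{knu}}$ is the congruence on $\mathcal A_n^*$ generated by $xzy=zxy$ ($x\le y<z$) and $yxz=yzx$ ($x<y\le z$) for letters $x,y,z$. *)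

theory Defs
  imports Main
begin

text \<open>Alphabet A_n = {1,...,n} (letter a_l is the natural number l); words are nat lists.\<close>

definition cmr_letter :: "nat \<Rightarrow> nat \<Rightarrow> nat list" where
  "cmr_letter n l = filter (\<lambda>a. a \<noteq> n - l + 1) (rev [1..<n+1])"

definition cmr :: "nat \<Rightarrow> nat list \<Rightarrow> nat list" where
  "cmr n w = concat (map (cmr_letter n) w)"

inductive knu_step :: "nat \<Rightarrow> nat list \<Rightarrow> nat list \<Rightarrow> bool" for n where
  knuth1: "\<lbrakk>set u \<subseteq> {1..n}; set w \<subseteq> {1..n}; 1 \<le> x; x \<le> y; y < z; z \<le> n\<rbrakk>
     \<Longrightarrow> knu_step n (u @ [x, z, y] @ w) (u @ [z, x, y] @ w)"
| knuth2: "\<lbrakk>set u \<subseteq> {1..n}; set w \<subseteq> {1..n}; 1 \<le> x; x < y; y \<le> z; z \<le> n\<rbrakk>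
     \<Longrightarrow> knu_step n (u @ [y, x, z] @ w) (u @ [y, z, x] @ w)"

inductive knu_equiv :: "nat \<Rightarrow> nat list \<Rightarrow> nat list \<Rightarrow> bool" for n where
  refl: "set u \<subseteq> {1..n} \<Longrightarrow> knu_equiv n u u"
| step: "knu_step n u v \<Longrightarrow> knu_equiv n u v"
| sym: "knu_equiv n u v \<Longrightarrow> knu_equiv n v u"
| trans: "knu_equiv n u v \<Longrightarrow> knu_equiv n v w \<Longrightarrow> knu_equiv n u w"

end

(*
  The co-mirror of a_l is the decreasing column of all letters except a_(n-l+1), and cmr is a
  monoid morphism; so it suffices that products of three such columns satisfy the two Knuth
  relations. The second relation is the image of the first under the reverse complement
  w \<mapsto> rev (map (\<lambda>x. n + 1 - x) w), an anti-automorphism of the plactic monoid. The first is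
  proved by induction on n: if no column misses 1, all three end in 1 and these letters can be
  gathered at the end, leaving the relation for n - 1 shifted by one; if no column misses n, the
  three copies of n are gathered at the front instead. The remaining case, where one column
  misses n and another misses 1, is computed by sliding single letters through columns.
*)

theory Submission
  imports Defs
begin

abbreviation word :: "nat \<Rightarrow> nat list \<Rightarrow> bool" where
  "word n w \<equiv> set w \<subseteq> {1..n}"

declare knu_equiv.trans [trans]

lemma knu_equiv_knuth1:
  "word n u \<Longrightarrow> word n w \<Longrightarrow> 1 \<le> x \<Longrightarrow> x \<le> y \<Longrightarrow> y < z \<Longrightarrow> z \<le> n
   \<Longrightarrow> knu_equiv n (u @ [x, z, y] @ w) (u @ [z, x, y] @ w)"
  by (intro knu_equiv.step knu_step.knuth1) auto

lemma knu_equiv_knuth2: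
  "word n u \<Longrightarrow> word n w \<Longrightarrow> 1 \<le> x \<Longrightarrow> x < y \<Longrightarrow> y \<le> z \<Longrightarrow> z \<le> n
   \<Longrightarrow> knu_equiv n (u @ [y, x, z] @ w) (u @ [y, z, x] @ w)"
  by (intro knu_equiv.step knu_step.knuth2) auto

lemma knu_equiv_eqI: "u = v \<Longrightarrow> word n u \<Longrightarrow> knu_equiv n u v"
  using knu_equiv.refl by blast

lemma knu_equiv_append_context:
  assumes "knu_equiv n u v" "word n p" "word n q"
  shows "knu_equiv n (p @ u @ q) (p @ v @ q)"
  using assms
proof (induction rule: knu_equiv.induct)
  case (refl u)
  then show ?case by (intro knu_equiv.refl) auto
next
  case (step u v)
  from step(1) show ?case
  proof (cases rule: knu_step.cases)
    case (knuth1 u' w x y z)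
    then show ?thesis
      using step(2,3) knu_equiv_knuth1[where u="p @ u'" and w="w @ q"] by simp
  next
    case (knuth2 u' w x y z)
    then show ?thesis
      using step(2,3) knu_equiv_knuth2[where u="p @ u'" and w="w @ q"] by simp
  qed
qed (blast intro: knu_equiv.sym knu_equiv.trans)+

lemma knu_equiv_concat_map:
  assumes letters: "\<And>l. l \<in> {1..n} \<Longrightarrow> word m (f l)"
    and rel1: "\<And>x y z. 1 \<le> x \<Longrightarrow> x \<le> y \<Longrightarrow> y < z \<Longrightarrow> z \<le> n
                 \<Longrightarrow> knu_equiv m (f x @ f z @ f y) (f z @ f x @ f y)"
    and rel2: "\<And>x y z. 1 \<le> x \<Longrightarrow> x < y \<Longrightarrow> y \<le> z \<Longrightarrow> z \<le> n
                 \<Longrightarrow> knu_equiv m (f y @ f x @ f z) (f y @ f z @ f x)"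
    and "knu_equiv n u v"
  shows "knu_equiv m (concat (map f u)) (concat (map f v))"
proof -
  have image: "word m (concat (map f w))" if "word n w" for w
    using that letters by fastforce
  show ?thesis
    using \<open>knu_equiv n u v\<close>
  proof (induction rule: knu_equiv.induct)
    case (refl u)
    then show ?case by (intro knu_equiv.refl image)
  next
    case (step u v)
    then show ?case
    proof (cases rule: knu_step.cases)
      case (knuth1 u' w x y z)
      then show ?thesis
        using knu_equiv_append_context[OF rel1 image image] by simp
    next
      case (knuth2 u' w x y z)
      then show ?thesis
        using knu_equiv_append_context[OF rel2 image image] by simp
    qed
  qed (blast intro: knu_equiv.sym knu_equiv.trans)+
qed

lemma knu_equiv_map_Suc:
  assumes "knu_equiv n u v"
  shows "knu_equiv (Suc n) (map Suc u) (map Suc v)"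
proof -
  have "knu_equiv (Suc n) (concat (map (\<lambda>x. [Suc x]) u)) (concat (map (\<lambda>x. [Suc x]) v))"
    by (rule knu_equiv_concat_map[OF _ _ _ assms])
      (use knu_equiv_knuth1[where u="[]" and w="[]"] knu_equiv_knuth2[where u="[]" and w="[]"] in auto)
  then show ?thesis by simp
qed

lemma knu_equiv_Suc:
  assumes "knu_equiv n u v"
  shows "knu_equiv (Suc n) u v"
proof -
  have "knu_equiv (Suc n) (concat (map (\<lambda>x. [x]) u)) (concat (map (\<lambda>x. [x]) v))"
    by (rule knu_equiv_concat_map[OF _ _ _ assms])
      (use knu_equiv_knuth1[where u="[]" and w="[]"] knu_equiv_knuth2[where u="[]" and w="[]"] in auto)
  then show ?thesis by simp
qed

definition rev_compl :: "nat \<Rightarrow> nat list \<Rightarrow> nat list" where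
  "rev_compl n w = rev (map (\<lambda>x. Suc n - x) w)"

lemma rev_compl_simps [simp]:
  "rev_compl n [] = []"
  "rev_compl n (x # w) = rev_compl n w @ [Suc n - x]"
  "rev_compl n (u @ v) = rev_compl n v @ rev_compl n u"
  by (simp_all add: rev_compl_def)

lemma word_rev_compl: "word n w \<Longrightarrow> word n (rev_compl n w)"
  by (auto simp: rev_compl_def subset_iff)

lemma rev_compl_rev_compl: "word n w \<Longrightarrow> rev_compl n (rev_compl n w) = w"
  by (induction w) auto

lemma sorted_rev_compl: "sorted_wrt (>) w \<Longrightarrow> word n w \<Longrightarrow> sorted_wrt (>) (rev_compl n w)"
  unfolding rev_compl_def sorted_wrt_rev sorted_wrt_map
  by (rule sorted_wrt_mono_rel[of _ "(>)"]) auto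

lemma rev_compl_interval:
  "t \<le> n \<Longrightarrow> rev_compl n (rev [b..<Suc t]) = rev [Suc n - t..<Suc (Suc n - b)]"
  by (rule nth_equalityI) (auto simp: rev_compl_def rev_nth simp del: upt_Suc)

lemma knu_equiv_rev_compl: "knu_equiv n u v \<Longrightarrow> knu_equiv n (rev_compl n u) (rev_compl n v)"
proof (induction rule: knu_equiv.induct)
  case (refl u)
  then show ?case by (intro knu_equiv.refl word_rev_compl)
next
  case (step u v)
  then show ?case
  proof (cases rule: knu_step.cases)
    case (knuth1 u' w x y z)
    have "knu_equiv n (rev_compl n w @ [Suc n - y, Suc n - z, Suc n - x] @ rev_compl n u')
                      (rev_compl n w @ [Suc n - y, Suc n - x, Suc n - z] @ rev_compl n u')"
      using knuth1 by (intro knu_equiv_knuth2 word_rev_compl) auto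
    then show ?thesis using knuth1 by simp
  next
    case (knuth2 u' w x y z)
    have "knu_equiv n (rev_compl n w @ [Suc n - z, Suc n - x, Suc n - y] @ rev_compl n u')
                      (rev_compl n w @ [Suc n - x, Suc n - z, Suc n - y] @ rev_compl n u')"
      using knuth2 by (intro knu_equiv_knuth1 word_rev_compl) auto
    then show ?thesis using knuth2 by simp
  qed
qed (blast intro: knu_equiv.sym knu_equiv.trans)+

lemma knu_equiv_rev_complD:
  "knu_equiv n (rev_compl n u) (rev_compl n v) \<Longrightarrow> word n u \<Longrightarrow> word n v \<Longrightarrow> knu_equiv n u v"
  using knu_equiv_rev_compl[of n "rev_compl n u" "rev_compl n v"] by (simp add: rev_compl_rev_compl)

lemma slide_into_column:
  "sorted_wrt (>) (x # xs) \<Longrightarrow> x \<le> w \<Longrightarrow> w \<le> n \<Longrightarrow> word n (x # xs) \<Longrightarrow> word n p \<Longrightarrow> word n q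
   \<Longrightarrow> knu_equiv n (p @ (x # xs) @ w # q) (p @ x # w # xs @ q)"
proof (induction xs arbitrary: x p)
  case Nil
  then show ?case by (intro knu_equiv_eqI) auto
next
  case (Cons x' xs)
  have "knu_equiv n (p @ x # x' # xs @ w # q) (p @ x # x' # w # xs @ q)"
    using Cons.IH[of x' "p @ [x]"] Cons.prems by simp
  also have "knu_equiv n \<dots> (p @ x # w # x' # xs @ q)"
    using knu_equiv_knuth2[of p n "xs @ q" x' x w] Cons.prems by simp
  finally show ?case by simp
qed

lemma slide_left_before_interval:
  assumes "sorted_wrt (>) X" "word m X" "length X \<le> length Y" "Y = rev [b..<Suc m]" "1 \<le> b"
    and "m < z" "z \<le> n" "word n p" "word n q"
  shows "knu_equiv n (p @ X @ z # Y @ q) (p @ z # X @ Y @ q)"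
  using assms
proof (induction X arbitrary: m Y z p)
  case Nil
  then show ?case by (intro knu_equiv_eqI) auto
next
  case (Cons x X)
  have "b \<le> m" using Cons.prems(3,4) by (cases "b \<le> m") auto
  then obtain Y' where Y: "Y = m # Y'" and Y': "Y' = rev [b..<Suc (m - 1)]"
    using Cons.prems(4,5) by simp
  have x: "1 \<le> x" "x \<le> m" "x < z" and X: "sorted_wrt (>) X" "word (m - 1) X"
    using Cons.prems(1,2,6) by force+
  have word_n: "word n (x # X)" "word n Y'" using Cons.prems(2,5,6,7) Y' by auto
  have "knu_equiv n (p @ x # X @ z # m # Y' @ q) (p @ x # z # X @ m # Y' @ q)"
    using slide_into_column[of x X z n p "m # Y' @ q"] x Cons.prems Y word_n by auto
  also have "knu_equiv n \<dots> (p @ x # z # m # X @ Y' @ q)"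
    using Cons.IH[of "m - 1" Y' m "p @ [x, z]"] X x Y Y' word_n Cons.prems by simp
  also have "knu_equiv n \<dots> (p @ z # x # m # X @ Y' @ q)"
    using knu_equiv_knuth1[of p n "X @ Y' @ q" x m z] x X Cons.prems word_n by force
  also have "knu_equiv n \<dots> (p @ z # x # X @ m # Y' @ q)"
    using slide_into_column[of x X m n "p @ [z]" "Y' @ q"] x Cons.prems word_n
    by (auto intro: knu_equiv.sym)
  finally show ?case using Y by simp
qed

lemma slide_right_after_interval:
  assumes X: "X = rev [b..<Suc t]" and "t \<le> n" "b \<le> n"
    and Y: "sorted_wrt (>) Y" "set Y \<subseteq> {b..n}" "length Y \<le> length X"
    and "1 \<le> a" "a < b" "word n p" "word n q"
  shows "knu_equiv n (p @ X @ a # Y @ q) (p @ X @ Y @ a # q)"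
proof (rule knu_equiv_rev_complD)
  have words: "word n X" "word n Y" using assms by auto
  have "knu_equiv n (rev_compl n q @ rev_compl n Y @ (Suc n - a) # rev_compl n X @ rev_compl n p)
                    (rev_compl n q @ (Suc n - a) # rev_compl n Y @ rev_compl n X @ rev_compl n p)"
  proof (rule slide_left_before_interval[where m="Suc n - b" and b="Suc n - t"])
    show "sorted_wrt (>) (rev_compl n Y)" using Y(1) words(2) by (rule sorted_rev_compl)
    show "word (Suc n - b) (rev_compl n Y)" using Y(2) by (auto simp: rev_compl_def subset_iff)
    show "length (rev_compl n Y) \<le> length (rev_compl n X)" using Y(3) by (simp add: rev_compl_def)
    show "rev_compl n X = rev [Suc n - t..<Suc (Suc n - b)]"
      using X \<open>t \<le> n\<close> by (simp add: rev_compl_interval del: upt_Suc)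
  qed (use assms word_rev_compl in auto)
  then show "knu_equiv n (rev_compl n (p @ X @ a # Y @ q)) (rev_compl n (p @ X @ Y @ a # q))"
    by simp
  show "word n (p @ X @ a # Y @ q)" "word n (p @ X @ Y @ a # q)"
    using assms words by auto
qed

lemma gather_max:
  assumes "sorted_wrt (>) X" "set X \<subseteq> {1..<z}" "1 \<le> z" "z \<le> n" "word n p" "word n q"
  shows "knu_equiv n (p @ z # X @ z # q) (p @ z # z # X @ q)"
proof (cases X)
  case Nil
  then show ?thesis using assms by (intro knu_equiv_eqI) auto
next
  case (Cons x X')
  have "word n X" using assms(2,4) by auto
  have "knu_equiv n (p @ z # x # X' @ z # q) (p @ z # x # z # X' @ q)"
    using slide_into_column[of x X' z n "p @ [z]" q] assms Cons \<open>word n X\<close> by auto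
  also have "knu_equiv n \<dots> (p @ z # z # x # X' @ q)"
    using knu_equiv_knuth2[of p n "X' @ q" x z z] assms Cons \<open>word n X\<close> by auto
  finally show ?thesis using Cons by simp
qed

lemma gather_min:
  assumes X: "sorted_wrt (>) X" "set X \<subseteq> {a<..n}" and "1 \<le> a" "a \<le> n" "word n p" "word n q"
  shows "knu_equiv n (p @ a # X @ a # q) (p @ X @ a # a # q)"
proof (rule knu_equiv_rev_complD)
  have word: "word n X" using X(2) \<open>1 \<le> a\<close> by auto
  have "knu_equiv n (rev_compl n q @ (Suc n - a) # rev_compl n X @ (Suc n - a) # rev_compl n p)
                    (rev_compl n q @ (Suc n - a) # (Suc n - a) # rev_compl n X @ rev_compl n p)"
  proof (rule gather_max)
    show "sorted_wrt (>) (rev_compl n X)" using X(1) word by (rule sorted_rev_compl)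
    show "set (rev_compl n X) \<subseteq> {1..<Suc n - a}" using X(2) by (auto simp: rev_compl_def subset_iff)
  qed (use assms word_rev_compl in auto)
  then show "knu_equiv n (rev_compl n (p @ a # X @ a # q)) (rev_compl n (p @ X @ a # a # q))"
    by simp
  show "word n (p @ a # X @ a # q)" "word n (p @ X @ a # a # q)"
    using assms word by auto
qed

definition column :: "nat \<Rightarrow> nat \<Rightarrow> nat list" where
  "column n m = filter (\<lambda>a. a \<noteq> m) (rev [1..<Suc n])"

lemma cmr_letter_eq_column: "cmr_letter n l = column n (n - l + 1)"
  by (simp add: cmr_letter_def column_def)

lemma set_column: "set (column n m) = {1..n} - {m}"
  by (auto simp: column_def)

lemma sorted_column: "sorted_wrt (>) (column n m)"
  unfolding column_def by (rule sorted_wrt_filter) (simp add: sorted_wrt_rev del: upt_Suc)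

lemma column_Suc_top: "m \<le> k \<Longrightarrow> column (Suc k) m = Suc k # column k m"
  by (simp add: column_def)

lemma column_Suc_bottom: "2 \<le> m \<Longrightarrow> column (Suc k) m = map Suc (column k (m - 1)) @ [1]"
proof -
  assume "2 \<le> m"
  have "[1..<Suc (Suc k)] = 1 # map Suc [1..<Suc k]"
    by (simp add: upt_conv_Cons map_Suc_upt del: upt_Suc)
  then have "rev [1..<Suc (Suc k)] = map Suc (rev [1..<Suc k]) @ [1]"
    by (simp add: rev_map del: upt_Suc)
  moreover have "filter (\<lambda>a. a \<noteq> m) (map Suc xs) = map Suc (filter (\<lambda>a. a \<noteq> m - 1) xs)" for xs
    using \<open>2 \<le> m\<close> by (induction xs) auto
  ultimately show ?thesis using \<open>2 \<le> m\<close> by (simp add: column_def del: upt_Suc)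
qed

lemma rev_compl_column: "rev_compl n (column n m) = column n (Suc n - m)"
proof -
  let ?f = "\<lambda>x. Suc n - x"
  have full: "map ?f [1..<Suc n] = rev [1..<Suc n]"
    using rev_compl_interval[of n n 1] by (simp add: rev_compl_def rev_map del: upt_Suc)
  have "rev_compl n (column n m) = map ?f (filter (\<lambda>a. a \<noteq> m) [1..<Suc n])"
    by (simp add: rev_compl_def column_def rev_filter rev_map del: upt_Suc)
  also have "\<dots> = map ?f (filter ((\<lambda>a. a \<noteq> Suc n - m) \<circ> ?f) [1..<Suc n])"
    by (rule arg_cong[where f="map ?f"], rule filter_cong) auto
  also have "\<dots> = filter (\<lambda>a. a \<noteq> Suc n - m) (map ?f [1..<Suc n])"
    by (simp only: filter_map)
  finally show ?thesis by (simp only: full column_def)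
qed

lemma columns_pull_bottom:
  assumes "2 \<le> A" "2 \<le> B" "2 \<le> C"
  shows "knu_equiv (Suc k) (column (Suc k) A @ column (Suc k) B @ column (Suc k) C)
           (map Suc (column k (A - 1) @ column k (B - 1) @ column k (C - 1)) @ [1, 1, 1])"
proof -
  define X where "X m = map Suc (column k (m - 1))" for m
  have X: "sorted_wrt (>) (X m)" "set (X m) \<subseteq> {1<..Suc k}" for m
    using sorted_column[of k "m - 1"] by (auto simp: X_def sorted_wrt_map set_column)
  then have word: "word (Suc k) (X m)" for m by fastforce
  have "knu_equiv (Suc k) (X A @ 1 # X B @ 1 # X C @ [1]) (X A @ X B @ 1 # 1 # X C @ [1])"
    using gather_min[OF X[of B], where p="X A" and q="X C @ [1]"] word by simp
  also have "knu_equiv (Suc k) \<dots> (X A @ X B @ 1 # X C @ [1, 1])"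
    using gather_min[OF X[of C], where p="X A @ X B @ [1]" and q="[]"] word by simp
  also have "knu_equiv (Suc k) \<dots> (X A @ X B @ X C @ [1, 1, 1])"
    using gather_min[OF X[of C], where p="X A @ X B" and q="[1]"] word by simp
  finally show ?thesis using assms by (simp add: column_Suc_bottom X_def)
qed

lemma columns_pull_top:
  assumes "A \<le> k" "B \<le> k" "C \<le> k"
  shows "knu_equiv (Suc k) (column (Suc k) A @ column (Suc k) B @ column (Suc k) C)
           ([Suc k, Suc k, Suc k] @ column k A @ column k B @ column k C)"
proof -
  have Y: "sorted_wrt (>) (column k m)" "set (column k m) \<subseteq> {1..<Suc k}" for m
    by (auto simp: sorted_column set_column)
  then have word: "word (Suc k) (column k m)" for m by fastforce
  let ?z = "Suc k" and ?Y = "column k"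
  have "knu_equiv ?z (?z # ?Y A @ ?z # ?Y B @ ?z # ?Y C) (?z # ?Y A @ ?z # ?z # ?Y B @ ?Y C)"
    using gather_max[OF Y[of B], where p="?z # ?Y A" and q="?Y C"] word by simp
  also have "knu_equiv ?z \<dots> (?z # ?z # ?Y A @ ?z # ?Y B @ ?Y C)"
    using gather_max[OF Y[of A], where p="[]" and q="?z # ?Y B @ ?Y C"] word by simp
  also have "knu_equiv ?z \<dots> (?z # ?z # ?z # ?Y A @ ?Y B @ ?Y C)"
    using gather_max[OF Y[of A], where p="[?z]" and q="?Y B @ ?Y C"] word by simp
  finally show ?thesis using assms by (simp add: column_Suc_top)
qed

lemma upt_one_Cons: "2 \<le> n \<Longrightarrow> [Suc 0..<n] = Suc 0 # [2..<n]"
  using upt_conv_Cons[of 1 n] by (simp add: numeral_2_eq_2)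

lemma column_eqs:
  assumes "2 \<le> n"
  shows "column n n = rev [2..<n] @ [1]"
    and "column n 1 = n # rev [2..<n]"
    and "1 < Q \<Longrightarrow> Q < n \<Longrightarrow> column n Q = n # filter (\<lambda>a. a \<noteq> Q) (rev [2..<n]) @ [1]"
  using assms by (auto simp: column_def upt_one_Cons)

lemma columns_last_first_last:
  assumes "2 \<le> n"
  shows "knu_equiv n (column n n @ column n 1 @ column n n) (column n 1 @ column n n @ column n n)"
proof -
  define M where "M = rev [2..<n]"
  have col: "column n n = M @ [1]" "column n 1 = n # M"
    using column_eqs[OF assms] by (simp_all add: M_def)
  have M: "sorted_wrt (>) M" "sorted_wrt (>) (M @ [1])" "set M \<subseteq> {2..n}" "word (n - 1) M" "word n M"
    by (auto simp: M_def sorted_wrt_rev sorted_wrt_append simp del: upt_Suc)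
  have I: "M = rev [2..<Suc (n - 1)]" "M @ [1] = rev [1..<Suc (n - 1)]"
    using assms by (simp_all add: M_def upt_one_Cons)
  note left = slide_left_before_interval[OF _ _ _ I(2), where z=n and n=n]
  note right = slide_right_after_interval[OF I(1), where n=n]
  have "knu_equiv n (column n n @ column n 1 @ column n n) (M @ 1 # M @ n # M @ [1])"
    unfolding col
    by (rule knu_equiv.sym) (use left[where X=M and p="M @ [1]" and q="[]"] M assms in auto)
  also have "knu_equiv n \<dots> (M @ M @ 1 # n # M @ [1])"
    using right[where Y=M and a=1 and p="[]" and q="n # M @ [1]"] M assms by auto
  also have "knu_equiv n \<dots> (M @ n # M @ 1 # M @ [1])"
    using left[where X="M @ [1]" and p=M and q="[]"] M assms by auto
  also have "knu_equiv n \<dots> (column n 1 @ column n n @ column n n)"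
    unfolding col using left[where X=M and p="[]" and q="M @ [1]"] M assms by auto
  finally show ?thesis .
qed

lemma columns_last_first_inner:
  assumes "1 < Q" "Q < n"
  shows "knu_equiv n (column n n @ column n 1 @ column n Q) (column n 1 @ column n n @ column n Q)"
proof -
  have n: "2 \<le> n" using assms by simp
  define M where "M = rev [2..<n]"
  define K where "K = filter (\<lambda>a. a \<noteq> Q) M"
  have col: "column n n = M @ [1]" "column n 1 = n # M" "column n Q = n # K @ [1]"
    using column_eqs[OF n] assms by (simp_all add: M_def K_def)
  have M: "sorted_wrt (>) M" "sorted_wrt (>) (M @ [1])" "set M \<subseteq> {2..n}" "word (n - 1) M" "word n M"
    by (auto simp: M_def sorted_wrt_rev sorted_wrt_append simp del: upt_Suc)
  have "length K < length M"
    unfolding K_def by (rule length_filter_less[of Q]) (use assms in \<open>auto simp: M_def\<close>)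
  then have K: "sorted_wrt (>) (n # K)" "set (n # K) \<subseteq> {2..n}" "length (n # K) \<le> length M" "word n K"
    using M n by (auto simp: K_def M_def sorted_wrt_filter simp del: upt_Suc)
  have I: "M = rev [2..<Suc (n - 1)]" "M @ [1] = rev [1..<Suc (n - 1)]" "n # M = rev [2..<Suc n]"
    using n by (simp_all add: M_def upt_one_Cons)
  note left = slide_left_before_interval[OF _ _ _ I(2), where z=n and n=n]
  note right = slide_right_after_interval[OF I(1), where n=n]
    and right' = slide_right_after_interval[OF I(3), where n=n]
  have "knu_equiv n (column n n @ column n 1 @ column n Q) (M @ 1 # n # M @ 1 # n # K)"
    unfolding col
    by (rule knu_equiv.sym) (use right'[where Y="n # K" and a=1 and p="M @ [1]" and q="[]"] M K n in auto)
  also have "knu_equiv n \<dots> (n # M @ 1 # M @ 1 # n # K)"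
    using left[where X="M @ [1]" and p="[]" and q="n # K"] M K n by auto
  also have "knu_equiv n \<dots> (n # M @ 1 # M @ n # K @ [1])"
    using right[where Y="n # K" and a=1 and p="n # M @ [1]" and q="[]"] M K n by auto
  also have "knu_equiv n \<dots> (column n 1 @ column n n @ column n Q)"
    unfolding col using right'[where Y=M and a=1 and p="[]" and q="n # K @ [1]"] M K n by auto
  finally show ?thesis .
qed

lemma knu_equiv_columns:
  "1 \<le> R \<Longrightarrow> R < Q \<Longrightarrow> Q \<le> P \<Longrightarrow> P \<le> n \<Longrightarrow>
   knu_equiv n (column n P @ column n R @ column n Q) (column n R @ column n P @ column n Q)"
proof (induction n arbitrary: P Q R)
  case 0
  then show ?case by simp
next
  case (Suc k)
  let ?col = "column (Suc k)"
  consider "R = 1" "P = Suc k" | "2 \<le> R" | "P \<le> k"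
    using Suc.prems by linarith
  then show ?case
  proof cases
    case 1
    then show ?thesis
      using columns_last_first_last[of "Suc k"] columns_last_first_inner[of Q "Suc k"] Suc.prems
      by (cases "Q = Suc k") auto
  next
    case 2
    let ?Suc_col = "\<lambda>A. map Suc (column k (A - 1))"
    have "knu_equiv k (column k (P - 1) @ column k (R - 1) @ column k (Q - 1))
                      (column k (R - 1) @ column k (P - 1) @ column k (Q - 1))"
      using Suc.IH[of "R - 1" "Q - 1" "P - 1"] Suc.prems 2 by simp
    note lifted = knu_equiv_append_context[OF knu_equiv_map_Suc[OF this], of "[]" "[1, 1, 1]"]
    have "knu_equiv (Suc k) (?col P @ ?col R @ ?col Q) (?Suc_col P @ ?Suc_col R @ ?Suc_col Q @ [1, 1, 1])"
      using columns_pull_bottom[of P R Q k] Suc.prems 2 by simp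
    also have "knu_equiv (Suc k) \<dots> (?Suc_col R @ ?Suc_col P @ ?Suc_col Q @ [1, 1, 1])"
      using lifted by simp
    also have "knu_equiv (Suc k) \<dots> (?col R @ ?col P @ ?col Q)"
      using knu_equiv.sym[OF columns_pull_bottom[of R P Q k]] Suc.prems 2 by simp
    finally show ?thesis .
  next
    case 3
    have "knu_equiv k (column k P @ column k R @ column k Q) (column k R @ column k P @ column k Q)"
      using Suc.IH[of R Q P] Suc.prems 3 by simp
    note lifted = knu_equiv_append_context[OF knu_equiv_Suc[OF this], of "[Suc k, Suc k, Suc k]" "[]"]
    have "knu_equiv (Suc k) (?col P @ ?col R @ ?col Q)
                            ([Suc k, Suc k, Suc k] @ column k P @ column k R @ column k Q)"
      using columns_pull_top[of P k R Q] Suc.prems 3 by simp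
    also have "knu_equiv (Suc k) \<dots> ([Suc k, Suc k, Suc k] @ column k R @ column k P @ column k Q)"
      using lifted by simp
    also have "knu_equiv (Suc k) \<dots> (?col R @ ?col P @ ?col Q)"
      using knu_equiv.sym[OF columns_pull_top[of R k P Q]] Suc.prems 3 by simp
    finally show ?thesis .
  qed
qed

lemma knu_equiv_columns_dual:
  assumes "1 \<le> R" "R \<le> Q" "Q < P" "P \<le> n"
  shows "knu_equiv n (column n Q @ column n P @ column n R) (column n Q @ column n R @ column n P)"
proof (rule knu_equiv_rev_complD)
  have "knu_equiv n (column n (Suc n - R) @ column n (Suc n - P) @ column n (Suc n - Q))
                    (column n (Suc n - P) @ column n (Suc n - R) @ column n (Suc n - Q))"
    using knu_equiv_columns[of "Suc n - P" "Suc n - Q" "Suc n - R" n] assms by simp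
  then show "knu_equiv n (rev_compl n (column n Q @ column n P @ column n R))
                         (rev_compl n (column n Q @ column n R @ column n P))"
    by (simp add: rev_compl_column)
qed (auto simp: set_column)

theorem mainTheorem14:
  fixes n :: nat
  assumes "n \<ge> 1"
  shows "(\<forall>p q r. 1 \<le> p \<and> p \<le> q \<and> q < r \<and> r \<le> n \<longrightarrow>
            knu_equiv n (cmr n [p, r, q]) (cmr n [r, p, q]))
       \<and> (\<forall>p q r. 1 \<le> p \<and> p < q \<and> q \<le> r \<and> r \<le> n \<longrightarrow>
            knu_equiv n (cmr n [q, p, r]) (cmr n [q, r, p]))
       \<and> (\<forall>u v. set u \<subseteq> {1..n} \<longrightarrow> set v \<subseteq> {1..n} \<longrightarrow>
            knu_equiv n u v \<longrightarrow> knu_equiv n (cmr n u) (cmr n v))"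
proof -
  have rel1: "knu_equiv n (cmr n [p, r, q]) (cmr n [r, p, q])"
    if "1 \<le> p" "p \<le> q" "q < r" "r \<le> n" for p q r
    using knu_equiv_columns[of "n - r + 1" "n - q + 1" "n - p + 1" n] that
    by (simp add: cmr_def cmr_letter_eq_column)
  have rel2: "knu_equiv n (cmr n [q, p, r]) (cmr n [q, r, p])"
    if "1 \<le> p" "p < q" "q \<le> r" "r \<le> n" for p q r
    using knu_equiv_columns_dual[of "n - r + 1" "n - q + 1" "n - p + 1" n] that
    by (simp add: cmr_def cmr_letter_eq_column)
  have "knu_equiv n (cmr n u) (cmr n v)" if "knu_equiv n u v" for u v
    unfolding cmr_def
  proof (rule knu_equiv_concat_map[OF _ _ _ that])
    show "word n (cmr_letter n l)" for l
      by (auto simp: cmr_letter_def)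
  qed (use rel1 rel2 in \<open>auto simp: cmr_def\<close>)
  then show ?thesis using rel1 rel2 by blast
qed

end
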